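(* Let $G$ be a connected orientable ribbon graph with root vertex $\bar v$, data as in the context, and let $e$ be an edge joining two distinct vertices $v_1,v_2$ such that $G-e$ is connected. Then $$\det M_G=\alpha_e\det M_{G-e}+\det M_{G/e}.$$ (If $G-e$ is disconnected, the identity holds with $\det M_{G-e}:=0$.)
   Context: Ribbon graph: finite graph (loops, multiple edges allowed) with, at each vertex, a cyclic order of its incident half-edges. Orient each edge arbitrarily. At each vertex $v$ choose a linear order of its half-edge positions $1,\dots,\deg v$ compatible with the cyclic order. For an edge $e$, vertex $v$ and position $i$: $\varepsilon^v_{ei}=+1$ if $e$ starts at position $i$ of $v$, $-1$ if it ends there, $0$ otherwise (a self-loop has both a $+1$ and a $-1$ at its vertex). Fix $\theta>0$ and edge parameters $\alpha_e$. For edges $e,e'$ set $f_{ee'}=-\frac{\theta}{4}\sum_v\sum_{i,j}\mathrm{sgn}(j-i)\,\varepsilon^v_{ei}\varepsilon^v_{e'j}$ (antisymmetric, $f_{ee}=0$). $M_G$ is the square matrix indexed by $E\sqcup(V\setminus\{\bar v\})$ with $(M_G)_{ee}=\alpha_e$, $(M_G)_{ee'}=f_{ee'}$ for $e\neq e'$, $(M_G)_{ev}=-\sum_i\varepsilon^v_{ei}$, $(M_G)_{ve}=\sum_i\varepsilon^v_{ei}$, $(M_G)_{vv'}=0$. (Its determinant is the first noncommutative Symanzik polynomial $U^\star_G$.) $G-e$: remove $e$ (the cyclic orders at $v_1,v_2$ lose the half-edge of $e$). $G/e$ (ribbon contraction): if the cyclic order at $v_1$ is $(e,h_1,\dots,h_k)$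 and at $v_2$ is $(e,h'_1,\dots,h'_m)$, remove $e$ and replace $v_1,v_2$ by one vertex with cyclic order $(h_1,\dots,h_k,h'_1,\dots,h'_m)$; this vertex is the root if $\bar v\in\{v_1,v_2\}$. Linear orders compatible with the cyclic orders are chosen at the vertices of $G-e$ and $G/e$. *)

theory Defs
  imports Complex_Main "HOL-Combinatorics.Permutations"
begin

(* At each vertex v, rot v is a linear order (list) of the half-edges at v; the cyclic
   order is this list up to rotation.  A half-edge is (e, True) if e starts at v,
   (e, False) if e ends at v (a self-loop contributes both). *)

definition ribbon_wf ::
  "'v set \<Rightarrow> 'e set \<Rightarrow> ('e \<Rightarrow> 'v) \<Rightarrow> ('e \<Rightarrow> 'v) \<Rightarrow> ('v \<Rightarrow> ('e \<times> bool) list) \<Rightarrow> bool" where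
  "ribbon_wf V E src tgt rot \<longleftrightarrow> finite V \<and> finite E \<and>
     (\<forall>e\<in>E. src e \<in> V \<and> tgt e \<in> V) \<and>
     (\<forall>v\<in>V. distinct (rot v) \<and>
        set (rot v) = {(e, True) | e. e \<in> E \<and> src e = v} \<union> {(e, False) | e. e \<in> E \<and> tgt e = v})"

definition graph_connected ::
  "'v set \<Rightarrow> 'e set \<Rightarrow> ('e \<Rightarrow> 'v) \<Rightarrow> ('e \<Rightarrow> 'v) \<Rightarrow> bool" where
  "graph_connected V E src tgt \<longleftrightarrow>
     (\<forall>u\<in>V. \<forall>w\<in>V. (u, w) \<in> ({(src e, tgt e) | e. e \<in> E} \<union> {(tgt e, src e) | e. e \<in> E})\<^sup>*)"

definition eps :: "('v \<Rightarrow> ('e \<times> bool) list) \<Rightarrow> 'v \<Rightarrow> 'e \<Rightarrow> nat \<Rightarrow> real" where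
  "eps rot v e i = (if i < length (rot v) then
      (if rot v ! i = (e, True) then 1 else if rot v ! i = (e, False) then -1 else 0) else 0)"

definition fcoef :: "real \<Rightarrow> 'v set \<Rightarrow> ('v \<Rightarrow> ('e \<times> bool) list) \<Rightarrow> 'e \<Rightarrow> 'e \<Rightarrow> real" where
  "fcoef \<theta> V rot e e' = - (\<theta> / 4) * (\<Sum>v\<in>V. \<Sum>i<length (rot v). \<Sum>j<length (rot v).
      sgn (real j - real i) * eps rot v e i * eps rot v e' j)"

definition incid :: "('v \<Rightarrow> ('e \<times> bool) list) \<Rightarrow> 'v \<Rightarrow> 'e \<Rightarrow> real" where
  "incid rot v e = (\<Sum>i<length (rot v). eps rot v e i)"

definition Midx :: "'e set \<Rightarrow> 'v set \<Rightarrow> 'v \<Rightarrow> ('e + 'v) set" where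
  "Midx E V r = Inl ` E \<union> Inr ` (V - {r})"

definition Mmat :: "real \<Rightarrow> ('e \<Rightarrow> real) \<Rightarrow> 'v set \<Rightarrow> ('v \<Rightarrow> ('e \<times> bool) list)
     \<Rightarrow> ('e + 'v) \<Rightarrow> ('e + 'v) \<Rightarrow> real" where
  "Mmat \<theta> \<alpha> V rot x y = (case (x, y) of
      (Inl e, Inl e') \<Rightarrow> (if e = e' then \<alpha> e else fcoef \<theta> V rot e e')
    | (Inl e, Inr v) \<Rightarrow> - incid rot v e
    | (Inr v, Inl e) \<Rightarrow> incid rot v e
    | (Inr v, Inr v') \<Rightarrow> 0)"

definition det_on :: "'i set \<Rightarrow> ('i \<Rightarrow> 'i \<Rightarrow> real) \<Rightarrow> real" where
  "det_on I A = (\<Sum>p\<in>{p. p permutes I}. of_int (sign p) * (\<Prod>i\<in>I. A i (p i)))"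

(* cyclic equivalence: xs is a linear order compatible with the cyclic order of ys *)
definition cyc_compat :: "'a list \<Rightarrow> 'a list \<Rightarrow> bool" where
  "cyc_compat xs ys \<longleftrightarrow> (\<exists>n. xs = rotate n ys)"

(* given a list (cyclic order) containing exactly one half-edge of e,
   the half-edges following it cyclically, with e removed: (e,h1..hk) \<mapsto> (h1..hk) *)
definition cut_after :: "'e \<Rightarrow> ('e \<times> bool) list \<Rightarrow> ('e \<times> bool) list" where
  "cut_after e r = (let i = length (takeWhile (\<lambda>h. fst h \<noteq> e) r) in drop (Suc i) r @ take i r)"

(* ribbon contraction of edge e (non-loop): vertices src e and tgt e merged into
   one vertex; the merged vertex is represented by tgt e if tgt e is the root, else by src e *)
definition keepv :: "('e \<Rightarrow> 'v) \<Rightarrow> ('e \<Rightarrow> 'v) \<Rightarrow> 'v \<Rightarrow> 'e \<Rightarrow> 'v" where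
  "keepv src tgt r e = (if tgt e = r then tgt e else src e)"

definition dropv :: "('e \<Rightarrow> 'v) \<Rightarrow> ('e \<Rightarrow> 'v) \<Rightarrow> 'v \<Rightarrow> 'e \<Rightarrow> 'v" where
  "dropv src tgt r e = (if tgt e = r then src e else tgt e)"

definition merged_rot :: "('e \<Rightarrow> 'v) \<Rightarrow> ('e \<Rightarrow> 'v) \<Rightarrow> ('v \<Rightarrow> ('e \<times> bool) list) \<Rightarrow> 'e \<Rightarrow> ('e \<times> bool) list" where
  "merged_rot src tgt rot e = cut_after e (rot (src e)) @ cut_after e (rot (tgt e))"

definition contr_map :: "('e \<Rightarrow> 'v) \<Rightarrow> ('e \<Rightarrow> 'v) \<Rightarrow> 'v \<Rightarrow> 'e \<Rightarrow> ('e \<Rightarrow> 'v) \<Rightarrow> ('e \<Rightarrow> 'v)" where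
  "contr_map src tgt r e g = (\<lambda>x. if g x = dropv src tgt r e then keepv src tgt r e else g x)"

end

theory Submission
  imports Defs
begin

text \<open>Rotating the linear order at a vertex v changes every f_{pq} by a combination of the
  incidence entries of v, i.e. by adding multiples of the row and column of v (for the root,
  of minus the sum of all other vertex rows, since every edge has one head and one tail); so the
  determinant depends only on the cyclic orders. We may therefore assume that the half-edges of e
  come first at both of its ends. Splitting det M_G along the diagonal entry alpha_e leaves
  alpha_e det M_{G-e} plus the determinant with that entry replaced by 0. There the rows and
  columns of e and of the non-root end d of e form an antidiagonal 2x2 block with entries
  +1 and -1, and the Schur complement of this block is exactly M_{G/e}: the correction terms
  glue the twist sums of the two ends into the twist sum of the concatenated order, and the
  incidence rows of the two ends into the row of the merged vertex.\<close>

lemma det_on_cong: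
  assumes "\<And>i j. i \<in> I \<Longrightarrow> j \<in> I \<Longrightarrow> A i j = B i j"
  shows "det_on I A = det_on I B"
  unfolding det_on_def
proof (rule sum.cong[OF refl])
  fix p assume "p \<in> {p. p permutes I}"
  then have "(\<Prod>i\<in>I. A i (p i)) = (\<Prod>i\<in>I. B i (p i))"
    by (intro prod.cong refl assms) (auto simp: permutes_in_image)
  then show "of_int (sign p) * (\<Prod>i\<in>I. A i (p i)) = of_int (sign p) * (\<Prod>i\<in>I. B i (p i))"
    by simp
qed

lemma det_on_transpose:
  assumes fin: "finite I"
  shows "det_on I (\<lambda>i j. A j i) = det_on I A"
proof -
  have "det_on I (\<lambda>i j. A j i) = (\<Sum>p\<in>{p. p permutes I}. of_int (sign p) * (\<Prod>i\<in>I. A (p i) i))"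
    by (simp add: det_on_def)
  also have "\<dots> = (\<Sum>p\<in>{p. p permutes I}. of_int (sign p) * (\<Prod>j\<in>I. A j (inv p j)))"
  proof (rule sum.cong[OF refl])
    fix p assume "p \<in> {p. p permutes I}"
    then have p: "p permutes I" by simp
    have "(\<Prod>j\<in>I. A j (inv p j)) = (\<Prod>i\<in>I. A (p i) (inv p (p i)))"
      using prod.reindex_bij_betw[OF permutes_imp_bij[OF p], of "\<lambda>j. A j (inv p j)"] by simp
    also have "\<dots> = (\<Prod>i\<in>I. A (p i) i)"
      using permutes_inverses(2)[OF p] by simp
    finally show "of_int (sign p) * (\<Prod>i\<in>I. A (p i) i) = of_int (sign p) * (\<Prod>j\<in>I. A j (inv p j))" by simp
  qed
  also have "\<dots> = (\<Sum>p\<in>{p. p permutes I}. of_int (sign (inv p)) * (\<Prod>j\<in>I. A j (inv p j)))"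
  proof (rule sum.cong[OF refl])
    fix p assume "p \<in> {p. p permutes I}"
    then have "permutation p" using fin permutation_permutes by auto
    then show "of_int (sign p) * (\<Prod>j\<in>I. A j (inv p j)) = of_int (sign (inv p)) * (\<Prod>j\<in>I. A j (inv p j))"
      by (simp add: sign_inverse)
  qed
  also have "\<dots> = det_on I A"
    unfolding det_on_def using sum_permutations_inverse[symmetric, of "\<lambda>q. of_int (sign q) * (\<Prod>j\<in>I. A j (q j))" I]
    by simp
  finally show ?thesis .
qed

lemma permutes_Diff_singleton_iff:
  assumes "k \<in> I"
  shows "p permutes I - {k} \<longleftrightarrow> p permutes I \<and> p k = k"
proof
  assume p: "p permutes I - {k}"
  show "p permutes I \<and> p k = k"
    using permutes_subset[OF p] permutes_not_in[OF p] by blast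
next
  assume p: "p permutes I \<and> p k = k"
  show "p permutes I - {k}"
    by (rule permutes_superset[of p I]) (use p in auto)
qed

lemma det_on_unit_row:
  assumes fin: "finite I" and k: "k \<in> I"
    and zero: "\<And>j. j \<in> I \<Longrightarrow> j \<noteq> k \<Longrightarrow> A k j = 0"
  shows "det_on I A = A k k * det_on (I - {k}) A"
proof -
  let ?t = "\<lambda>p. of_int (sign p) * (\<Prod>i\<in>I. A i (p i))"
  have "det_on I A = (\<Sum>p\<in>{p. p permutes I}. ?t p)" by (simp add: det_on_def)
  also have "\<dots> = (\<Sum>p\<in>{p. p permutes I \<and> p k = k}. ?t p)"
  proof (rule sum.mono_neutral_right)
    show "finite {p. p permutes I}" using fin by (simp add: finite_permutations)
    show "{p. p permutes I \<and> p k = k} \<subseteq> {p. p permutes I}" by blast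
    show "\<forall>p\<in>{p. p permutes I} - {p. p permutes I \<and> p k = k}. ?t p = 0"
    proof
      fix p assume "p \<in> {p. p permutes I} - {p. p permutes I \<and> p k = k}"
      then have p: "p permutes I" "p k \<noteq> k" by auto
      have "p k \<in> I" using permutes_in_image[OF p(1)] k by simp
      then have "A k (p k) = 0" using zero p(2) by simp
      then have "(\<Prod>i\<in>I. A i (p i)) = 0" by (rule prod_zero[OF fin, OF bexI[OF _ k]])
      then show "?t p = 0" by simp
    qed
  qed
  also have "\<dots> = (\<Sum>p\<in>{p. p permutes I - {k}}. A k k * (of_int (sign p) * (\<Prod>i\<in>I - {k}. A i (p i))))"
    unfolding permutes_Diff_singleton_iff[OF k]
  proof (rule sum.cong[OF refl])
    fix p assume "p \<in> {p. p permutes I \<and> p k = k}"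
    then have "p k = k" by simp
    then show "?t p = A k k * (of_int (sign p) * (\<Prod>i\<in>I - {k}. A i (p i)))"
      using prod.remove[OF fin k, of "\<lambda>i. A i (p i)"] by simp
  qed
  also have "\<dots> = A k k * det_on (I - {k}) A"
    by (simp add: det_on_def sum_distrib_left)
  finally show ?thesis .
qed

lemma det_on_unit_col:
  assumes fin: "finite I" and k: "k \<in> I"
    and zero: "\<And>j. j \<in> I \<Longrightarrow> j \<noteq> k \<Longrightarrow> A j k = 0"
  shows "det_on I A = A k k * det_on (I - {k}) A"
proof -
  have "det_on I A = det_on I (\<lambda>i j. A j i)" by (rule det_on_transpose[OF fin, symmetric])
  also have "\<dots> = A k k * det_on (I - {k}) (\<lambda>i j. A j i)"
    by (rule det_on_unit_row[OF fin k]) (simp add: zero)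
  also have "det_on (I - {k}) (\<lambda>i j. A j i) = det_on (I - {k}) A"
    by (rule det_on_transpose[OF finite_Diff[OF fin]])
  finally show ?thesis .
qed

lemma det_on_row_linear:
  assumes fin: "finite I" and k: "k \<in> I"
  shows "det_on I (\<lambda>i j. if i = k then u j + c * v j else A i j)
       = det_on I (\<lambda>i j. if i = k then u j else A i j) + c * det_on I (\<lambda>i j. if i = k then v j else A i j)"
proof -
  have row: "(\<Prod>i\<in>I. (if i = k then w (p i) else A i (p i))) = w (p k) * (\<Prod>i\<in>I - {k}. A i (p i))" for w p
  proof -
    have "(\<Prod>i\<in>I. (if i = k then w (p i) else A i (p i)))
        = (if k = k then w (p k) else A k (p k)) * (\<Prod>i\<in>I - {k}. (if i = k then w (p i) else A i (p i)))"
      by (rule prod.remove[OF fin k])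
    also have "(\<Prod>i\<in>I - {k}. (if i = k then w (p i) else A i (p i))) = (\<Prod>i\<in>I - {k}. A i (p i))"
      by (rule prod.cong) auto
    finally show ?thesis by simp
  qed
  have "det_on I (\<lambda>i j. if i = k then u j + c * v j else A i j)
      = (\<Sum>p\<in>{p. p permutes I}. of_int (sign p) * ((u (p k) + c * v (p k)) * (\<Prod>i\<in>I - {k}. A i (p i))))"
    unfolding det_on_def using row[of "\<lambda>j. u j + c * v j"] by simp
  also have "\<dots> = (\<Sum>p\<in>{p. p permutes I}. of_int (sign p) * (u (p k) * (\<Prod>i\<in>I - {k}. A i (p i))))
      + c * (\<Sum>p\<in>{p. p permutes I}. of_int (sign p) * (v (p k) * (\<Prod>i\<in>I - {k}. A i (p i))))"
    unfolding sum_distrib_left sum.distrib[symmetric] by (rule sum.cong[OF refl]) (simp add: algebra_simps)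
  also have "\<dots> = det_on I (\<lambda>i j. if i = k then u j else A i j) + c * det_on I (\<lambda>i j. if i = k then v j else A i j)"
    unfolding det_on_def using row[of u] row[of v] by simp
  finally show ?thesis .
qed

lemma det_on_equal_rows:
  assumes fin: "finite I" and ik: "i \<in> I" "k \<in> I" "i \<noteq> k"
    and eq: "\<And>j. A i j = A k j"
  shows "det_on I A = 0"
proof -
  let ?\<tau> = "Transposition.transpose i k"
  let ?t = "\<lambda>p. of_int (sign p) * (\<Prod>x\<in>I. A x (p x))"
  have \<tau>: "?\<tau> permutes I" using ik by (simp add: permutes_swap_id)
  have "det_on I A = (\<Sum>p | p permutes I. ?t (p \<circ> ?\<tau>))"
    unfolding det_on_def by (rule sum_permutations_compose_right[OF \<tau>])
  also have "\<dots> = (\<Sum>p | p permutes I. - ?t p)"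
  proof (rule sum.cong[OF refl])
    fix p assume "p \<in> {p. p permutes I}"
    then have p: "p permutes I" by simp
    have "permutation p" using p fin permutation_permutes by auto
    then have "sign (p \<circ> ?\<tau>) = - sign p"
      using ik by (simp add: sign_compose[OF _ permutation_swap_id] sign_swap_id)
    moreover have "(\<Prod>x\<in>I. A x ((p \<circ> ?\<tau>) x)) = (\<Prod>y\<in>I. A (?\<tau> y) (p y))"
      using prod.reindex_bij_betw[OF permutes_imp_bij[OF \<tau>], of "\<lambda>y. A (?\<tau> y) (p y)"] by simp
    moreover have "A (?\<tau> y) (p y) = A y (p y)" for y
      using eq by (cases "y = i"; cases "y = k") (auto simp: Transposition.transpose_def)
    ultimately show "?t (p \<circ> ?\<tau>) = - ?t p" by simp
  qed
  also have "\<dots> = - det_on I A" by (simp add: det_on_def sum_negf)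
  finally show ?thesis by simp
qed

lemma det_on_add_row_multiple:
  assumes fin: "finite I" and ik: "i \<in> I" "k \<in> I" "i \<noteq> k"
  shows "det_on I (\<lambda>x y. if x = i then A x y + c * A k y else A x y) = det_on I A"
proof -
  have "det_on I (\<lambda>x y. if x = i then A x y + c * A k y else A x y)
      = det_on I (\<lambda>x y. if x = i then A i y + c * A k y else A x y)"
    by (rule det_on_cong) simp
  also have "\<dots> = det_on I (\<lambda>x y. if x = i then A i y else A x y)
      + c * det_on I (\<lambda>x y. if x = i then A k y else A x y)"
    by (rule det_on_row_linear[OF fin ik(1)])
  also have "det_on I (\<lambda>x y. if x = i then A k y else A x y) = 0"
    by (rule det_on_equal_rows[OF fin ik]) (use ik in simp)
  also have "det_on I (\<lambda>x y. if x = i then A i y else A x y) = det_on I A"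
    by (rule det_on_cong) simp
  finally show ?thesis by simp
qed

lemma det_on_add_row_multiples:
  assumes fin: "finite I" and k: "k \<in> I" and dk: "d k = 0"
  shows "det_on I (\<lambda>x y. A x y + d x * A k y) = det_on I A"
proof -
  have gen: "finite J \<Longrightarrow> J \<subseteq> I - {k} \<Longrightarrow>
      det_on I (\<lambda>x y. if x \<in> J then A x y + d x * A k y else A x y) = det_on I A" for J
  proof (induction J rule: finite_induct)
    case empty then show ?case by simp
  next
    case (insert j J)
    let ?B = "\<lambda>x y. if x \<in> J then A x y + d x * A k y else A x y"
    have jI: "j \<in> I" "j \<noteq> k" using insert by auto
    have "det_on I (\<lambda>x y. if x \<in> insert j J then A x y + d x * A k y else A x y)
        = det_on I (\<lambda>x y. if x = j then ?B x y + d j * ?B k y else ?B x y)"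
      using insert(2,4) by (intro det_on_cong) auto
    also have "\<dots> = det_on I ?B" by (rule det_on_add_row_multiple[OF fin jI(1) k jI(2)])
    also have "\<dots> = det_on I A" using insert by simp
    finally show ?case .
  qed
  have "det_on I (\<lambda>x y. A x y + d x * A k y)
      = det_on I (\<lambda>x y. if x \<in> I - {k} then A x y + d x * A k y else A x y)"
    using dk by (intro det_on_cong) auto
  also have "\<dots> = det_on I A" using fin by (intro gen) auto
  finally show ?thesis .
qed

lemma det_on_add_row_combinations:
  assumes fin: "finite I" and K: "K \<subseteq> I" and c0: "\<And>x k. x \<in> K \<Longrightarrow> k \<in> K \<Longrightarrow> c x k = 0"
  shows "det_on I (\<lambda>x y. A x y + (\<Sum>k\<in>K. c x k * A k y)) = det_on I A"
  using finite_subset[OF K fin] K c0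
proof (induction K rule: finite_induct)
  case (insert k0 K)
  let ?B = "\<lambda>x y. A x y + (\<Sum>k\<in>K. c x k * A k y)"
  have s0: "(\<Sum>k\<in>K. c k0 k * A k y) = 0" for y
    using insert.prems(2) by (intro sum.neutral) auto
  have "det_on I (\<lambda>x y. A x y + (\<Sum>k\<in>insert k0 K. c x k * A k y))
      = det_on I (\<lambda>x y. ?B x y + c x k0 * ?B k0 y)"
    using insert(1,2) by (intro det_on_cong) (simp add: s0 add_ac)
  also have "\<dots> = det_on I ?B"
    using insert by (intro det_on_add_row_multiples[OF fin]) auto
  also have "\<dots> = det_on I A"
    using insert by auto
  finally show ?case .
next
  case empty
  then show ?case by simp
qed

lemma det_on_add_col_combinations:
  assumes fin: "finite I" and K: "K \<subseteq> I" and c0: "\<And>x k. x \<in> K \<Longrightarrow> k \<in> K \<Longrightarrow> c x k = 0"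
  shows "det_on I (\<lambda>x y. A x y + (\<Sum>k\<in>K. c y k * A x k)) = det_on I A"
proof -
  have "det_on I (\<lambda>x y. A x y + (\<Sum>k\<in>K. c y k * A x k))
      = det_on I (\<lambda>x y. A y x + (\<Sum>k\<in>K. c x k * A y k))"
    by (rule det_on_transpose[OF fin, symmetric])
  also have "\<dots> = det_on I (\<lambda>x y. A y x)"
    by (rule det_on_add_row_combinations[OF fin K c0])
  also have "\<dots> = det_on I A"
    by (rule det_on_transpose[OF fin])
  finally show ?thesis .
qed

lemma det_on_add_rank_two:
  assumes fin: "finite I" and K: "K \<subseteq> I" and u0: "\<And>k. k \<in> K \<Longrightarrow> u k = 0"
    and A0: "\<And>k k'. k \<in> K \<Longrightarrow> k' \<in> K \<Longrightarrow> A k k' = 0"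
  shows "det_on I (\<lambda>x y. A x y + u x * (\<Sum>k\<in>K. g k * A k y) + u y * (\<Sum>k\<in>K. g k * A x k))
       = det_on I A"
proof -
  let ?B = "\<lambda>x y. A x y + (\<Sum>k\<in>K. u x * g k * A k y)"
  have "?B x k = A x k" if "k \<in> K" for x k
    using A0 that by simp
  then have "det_on I (\<lambda>x y. A x y + u x * (\<Sum>k\<in>K. g k * A k y) + u y * (\<Sum>k\<in>K. g k * A x k))
      = det_on I (\<lambda>x y. ?B x y + (\<Sum>k\<in>K. u y * g k * ?B x k))"
    by (intro det_on_cong) (simp add: sum_distrib_left mult.assoc)
  also have "\<dots> = det_on I ?B"
    by (rule det_on_add_col_combinations[OF fin K]) (simp add: u0)
  also have "\<dots> = det_on I A"
    by (rule det_on_add_row_combinations[OF fin K]) (simp add: u0)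
  finally show ?thesis .
qed

lemma det_on_split_diagonal:
  assumes fin: "finite I" and k: "k \<in> I"
  shows "det_on I A = A k k * det_on (I - {k}) A + det_on I (\<lambda>x y. if x = k \<and> y = k then 0 else A x y)"
proof -
  let ?u = "\<lambda>j. if j = k then 0 else A k j"
  let ?v = "\<lambda>j. if j = k then (1::real) else 0"
  let ?E = "\<lambda>i j. if i = k then ?v j else A i j"
  have "det_on I A = det_on I (\<lambda>i j. if i = k then ?u j + A k k * ?v j else A i j)"
    by (rule det_on_cong) auto
  also have "\<dots> = det_on I (\<lambda>i j. if i = k then ?u j else A i j) + A k k * det_on I ?E"
    by (rule det_on_row_linear[OF fin k])
  also have "det_on I (\<lambda>i j. if i = k then ?u j else A i j)
      = det_on I (\<lambda>x y. if x = k \<and> y = k then 0 else A x y)"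
    by (rule det_on_cong) auto
  also have "det_on I ?E = ?E k k * det_on (I - {k}) ?E"
    by (rule det_on_unit_row[OF fin k]) simp
  also have "det_on (I - {k}) ?E = det_on (I - {k}) A"
    by (rule det_on_cong) auto
  finally show ?thesis by simp
qed

lemma det_on_antidiagonal_pair:
  assumes fin: "finite I" and eI: "e \<in> I" and dI: "d \<in> I" and ed: "e \<noteq> d"
    and Aee: "A e e = 0" and Add: "A d d = 0" and Aed: "A e d = - \<sigma>" and Ade: "A d e = \<sigma>"
    and col: "\<And>x. x \<notin> {e, d} \<Longrightarrow> A x e = 0 \<and> A x d = 0"
    and row: "\<And>y. y \<notin> {e, d} \<Longrightarrow> A e y = 0 \<and> A d y = 0"
  shows "det_on I A = \<sigma> * \<sigma> * det_on (I - {e, d}) A"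
proof -
  \<comment> \<open>adding column d to column e and then row e to row d makes the matrix triangular on {e, d}\<close>
  define B where "B x y = A x y + (\<Sum>k\<in>{d}. (if y = e then 1 else 0) * A x k)" for x y
  define C where "C x y = B x y + (\<Sum>k\<in>{e}. (if x = d then 1 else 0) * B k y)" for x y
  have "det_on I B = det_on I A"
    unfolding B_def by (rule det_on_add_col_combinations[OF fin]) (use dI ed in auto)
  moreover have "det_on I C = det_on I B"
    unfolding C_def by (rule det_on_add_row_combinations[OF fin]) (use eI ed in auto)
  moreover have "det_on I C = C e e * det_on (I - {e}) C"
    by (rule det_on_unit_col[OF fin eI]) (use ed col Aee Add Aed Ade in \<open>auto simp: B_def C_def\<close>)
  moreover have "det_on (I - {e}) C = C d d * det_on (I - {e} - {d}) C"
    by (rule det_on_unit_row) (use fin dI ed row in \<open>auto simp: B_def C_def\<close>)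
  moreover have "det_on (I - {e} - {d}) C = det_on (I - {e, d}) A"
    unfolding Diff_insert2[symmetric] by (rule det_on_cong) (auto simp: B_def C_def)
  moreover have "C e e = - \<sigma>" "C d d = - \<sigma>"
    using ed Aee Add Aed Ade by (simp_all add: B_def C_def)
  ultimately show ?thesis by simp
qed

lemma det_on_eliminate_pair:
  assumes fin: "finite I" and eI: "e \<in> I" and dI: "d \<in> I" and ed: "e \<noteq> d"
    and Aee: "A e e = 0" and Add: "A d d = 0" and Aed: "A e d = - \<sigma>" and Ade: "A d e = \<sigma>"
    and \<sigma>: "\<sigma> \<noteq> 0"
  shows "det_on I A = \<sigma> * \<sigma> * det_on (I - {e, d}) (\<lambda>x y. A x y + (A x d * A e y - A x e * A d y) / \<sigma>)"
proof -
  have K: "{e, d} \<subseteq> I" using eI dI by simp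
  \<comment> \<open>clear columns e and d with rows e and d, then rows e and d with columns e and d\<close>
  define c where "c x k = (if x \<in> {e, d} then 0 else if k = e then A x d / \<sigma> else - A x e / \<sigma>)" for x k
  define B where "B x y = A x y + (\<Sum>k\<in>{e, d}. c x k * A k y)" for x y
  define c' where "c' y k = (if y \<in> {e, d} then 0 else if k = e then - B d y / \<sigma> else B e y / \<sigma>)" for y k
  define C where "C x y = B x y + (\<Sum>k\<in>{e, d}. c' y k * B x k)" for x y
  have "det_on I A = det_on I B"
    unfolding B_def by (rule det_on_add_row_combinations[OF fin K, symmetric]) (simp add: c_def)
  also have "\<dots> = det_on I C"
    unfolding C_def by (rule det_on_add_col_combinations[OF fin K, symmetric]) (simp add: c'_def)
  also have "\<dots> = \<sigma> * \<sigma> * det_on (I - {e, d}) C"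
  proof (rule det_on_antidiagonal_pair[OF fin eI dI ed])
    have Bed: "B e y = A e y" "B d y = A d y" for y
      using ed by (simp_all add: B_def c_def)
    have Bcol: "B x e = 0" "B x d = 0" if "x \<notin> {e, d}" for x
      using that ed \<sigma> Aee Ade Aed Add by (simp_all add: B_def c_def field_simps)
    have CB: "C x y = B x y" if "x \<notin> {e, d} \<or> y \<in> {e, d}" for x y
      using that ed Bed Bcol Aee Ade Aed Add by (auto simp: C_def c'_def)
    show "C e e = 0" "C d d = 0" "C e d = - \<sigma>" "C d e = \<sigma>"
      using CB Bed Aee Ade Aed Add by simp_all
    show "C x e = 0 \<and> C x d = 0" if "x \<notin> {e, d}" for x
      using that CB Bcol by simp
    show "C e y = 0 \<and> C d y = 0" if "y \<notin> {e, d}" for y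
      using that ed \<sigma> Bed Aee Ade Aed Add by (simp add: C_def c'_def field_simps)
  qed
  also have "det_on (I - {e, d}) C = det_on (I - {e, d}) (\<lambda>x y. A x y + (A x d * A e y - A x e * A d y) / \<sigma>)"
    by (rule det_on_cong) (use ed \<sigma> Aee Ade Aed Add in \<open>auto simp: C_def c'_def B_def c_def field_simps\<close>)
  finally show ?thesis .
qed

definition hsign :: "'e \<times> bool \<Rightarrow> 'e \<Rightarrow> real" where
  "hsign h x = (if fst h = x then (if snd h then 1 else -1) else 0)"

definition incid_list :: "('e \<times> bool) list \<Rightarrow> 'e \<Rightarrow> real" where
  "incid_list L x = sum_list (map (\<lambda>h. hsign h x) L)"

fun twist_list :: "('e \<times> bool) list \<Rightarrow> 'e \<Rightarrow> 'e \<Rightarrow> real" where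
  "twist_list [] x y = 0"
| "twist_list (h # L) x y = hsign h x * incid_list L y - hsign h y * incid_list L x + twist_list L x y"

lemma incid_list_simps [simp]:
  "incid_list [] x = 0" "incid_list (h # L) x = hsign h x + incid_list L x"
  by (simp_all add: incid_list_def)

lemma incid_list_append [simp]: "incid_list (L @ M) x = incid_list L x + incid_list M x"
  by (simp add: incid_list_def)

lemma incid_list_rotate1 [simp]: "incid_list (rotate1 L) x = incid_list L x"
  by (cases L) (simp_all add: add.commute)

lemma incid_list_rotate [simp]: "incid_list (rotate n L) x = incid_list L x"
  by (induction n) simp_all

lemma twist_list_append:
  "twist_list (L @ M) x y
     = twist_list L x y + twist_list M x y + incid_list L x * incid_list M y - incid_list L y * incid_list M x"
  by (induction L) (simp_all add: algebra_simps)

lemma twist_list_rotate1_Cons: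
  "twist_list (rotate1 (h # L)) x y
     = twist_list (h # L) x y + 2 * (incid_list (h # L) x * hsign h y - incid_list (h # L) y * hsign h x)"
  by (simp add: twist_list_append algebra_simps)

lemma twist_list_antisym: "twist_list L x y = - twist_list L y x"
  by (induction L) (simp_all add: algebra_simps)

lemma incid_list_eq_0: "x \<notin> fst ` set L \<Longrightarrow> incid_list L x = 0"
  by (induction L) (auto simp: hsign_def)

lemma twist_list_eq_0: "x \<notin> fst ` set L \<Longrightarrow> twist_list L x y = 0"
  by (induction L) (auto simp: hsign_def incid_list_eq_0)

lemma incid_list_filter:
  "(\<And>h. h \<in> set L \<Longrightarrow> \<not> P h \<Longrightarrow> fst h \<noteq> x) \<Longrightarrow> incid_list (filter P L) x = incid_list L x"
  by (induction L) (auto simp: hsign_def)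

lemma twist_list_filter:
  "(\<And>h. h \<in> set L \<Longrightarrow> \<not> P h \<Longrightarrow> fst h \<noteq> x \<and> fst h \<noteq> y) \<Longrightarrow> twist_list (filter P L) x y = twist_list L x y"
  by (induction L) (auto simp: hsign_def incid_list_filter)

lemma incid_list_distinct:
  assumes "distinct L"
  shows "incid_list L x = (if (x, True) \<in> set L then 1 else 0) - (if (x, False) \<in> set L then 1 else 0)"
proof -
  have "hsign h x = (if h = (x, True) then 1 else 0) - (if h = (x, False) then 1 else 0)" for h
    by (cases h) (auto simp: hsign_def)
  then have "incid_list L x = (\<Sum>h\<in>set L. (if h = (x, True) then 1 else 0) - (if h = (x, False) then 1 else 0))"
    using assms by (simp add: incid_list_def sum_list_distinct_conv_sum_set)
  then show ?thesis
    by (simp add: sum_subtractf)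
qed

lemma eps_eq_hsign: "eps rot v x i = (if i < length (rot v) then hsign (rot v ! i) x else 0)"
  by (cases "rot v ! i") (auto simp: eps_def hsign_def)

lemma sum_hsign_nth: "(\<Sum>i<length L. hsign (L ! i) x) = incid_list L x"
  by (induction L) (simp_all del: sum.lessThan_Suc add: sum.lessThan_Suc_shift)

lemma incid_eq_incid_list: "incid rot v x = incid_list (rot v) x"
  by (simp add: incid_def eps_eq_hsign sum_hsign_nth)

lemma sum_sgn_eq_twist_list:
  "(\<Sum>i<length L. \<Sum>j<length L. sgn (real j - real i) * hsign (L ! i) x * hsign (L ! j) y) = twist_list L x y"
proof (induction L)
  case (Cons h L)
  have "(\<Sum>j<length L. sgn (real (Suc j) - real 0) * hsign h x * hsign (L ! j) y) = hsign h x * incid_list L y"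
    by (simp add: sum_distrib_left[symmetric] sum_hsign_nth)
  moreover have "(\<Sum>i<length L. sgn (real 0 - real (Suc i)) * hsign (L ! i) x * hsign h y)
      = - (hsign h y * incid_list L x)"
    by (simp add: sum_negf sum_distrib_left[symmetric] sum_hsign_nth mult.commute)
  ultimately show ?case
    by (simp add: sum.lessThan_Suc_shift sum_subtractf Cons.IH sum_distrib_left[symmetric]
        sum_distrib_right[symmetric] sum_hsign_nth del: sum.lessThan_Suc)
qed simp

lemma fcoef_eq_twist_list: "fcoef \<theta> V rot x y = - (\<theta> / 4) * (\<Sum>v\<in>V. twist_list (rot v) x y)"
proof -
  have "(\<Sum>i<length (rot v). \<Sum>j<length (rot v). sgn (real j - real i) * eps rot v x i * eps rot v y j)
      = twist_list (rot v) x y" for v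
    using sum_sgn_eq_twist_list[of "rot v" x y] by (simp add: eps_eq_hsign)
  then show ?thesis
    by (simp add: fcoef_def)
qed

lemma finite_Midx: "finite E \<Longrightarrow> finite V \<Longrightarrow> finite (Midx E V r)"
  by (simp add: Midx_def)

lemma Midx_Diff_Inl: "Midx E V r - {Inl e} = Midx (E - {e}) V r"
  by (auto simp: Midx_def)

lemma Midx_Diff_Inl_Inr: "Midx E V r - {Inl e, Inr d} = Midx (E - {e}) (V - {d}) r"
  by (auto simp: Midx_def)

lemma Mmat_simps [simp]:
  "Mmat \<theta> \<alpha> V rot (Inl p) (Inl q) = (if p = q then \<alpha> p else fcoef \<theta> V rot p q)"
  "Mmat \<theta> \<alpha> V rot (Inl p) (Inr w) = - incid_list (rot w) p"
  "Mmat \<theta> \<alpha> V rot (Inr w) (Inl q) = incid_list (rot w) q"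
  "Mmat \<theta> \<alpha> V rot (Inr w) (Inr u) = 0"
  by (simp_all add: Mmat_def incid_eq_incid_list)

lemma det_Mmat_cong:
  assumes "\<And>w. w \<in> V \<Longrightarrow> rot' w = rot w"
  shows "det_on (Midx E V r) (Mmat \<theta> \<alpha> V rot') = det_on (Midx E V r) (Mmat \<theta> \<alpha> V rot)"
proof (rule det_on_cong)
  fix x y assume "x \<in> Midx E V r" "y \<in> Midx E V r"
  moreover have "fcoef \<theta> V rot' p q = fcoef \<theta> V rot p q" for p q
    unfolding fcoef_eq_twist_list using assms by simp
  ultimately show "Mmat \<theta> \<alpha> V rot' x y = Mmat \<theta> \<alpha> V rot x y"
    using assms by (cases x; cases y) (auto simp: Midx_def)
qed

definition balanced :: "'v set \<Rightarrow> 'e set \<Rightarrow> ('v \<Rightarrow> ('e \<times> bool) list) \<Rightarrow> bool" where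
  "balanced V E rot \<longleftrightarrow> (\<forall>x\<in>E. (\<Sum>v\<in>V. incid_list (rot v) x) = 0)"

lemma balanced_vertex_row_combination:
  assumes bal: "balanced V E rot" and fin: "finite V" and r: "r \<in> V" and v: "v \<in> V"
  obtains \<gamma> where "\<And>q. q \<in> E \<Longrightarrow> (\<Sum>w\<in>V - {r}. \<gamma> w * incid_list (rot w) q) = incid_list (rot v) q"
proof
  define \<gamma> where "\<gamma> w = (if v = r then -1 else if w = v then 1 else (0::real))" for w
  fix q assume q: "q \<in> E"
  show "(\<Sum>w\<in>V - {r}. \<gamma> w * incid_list (rot w) q) = incid_list (rot v) q"
  proof (cases "v = r")
    case True
    have "(\<Sum>w\<in>V. incid_list (rot w) q) = incid_list (rot r) q + (\<Sum>w\<in>V - {r}. incid_list (rot w) q)"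
      by (rule sum.remove[OF fin r])
    then show ?thesis using bal q True by (simp add: balanced_def \<gamma>_def sum_negf)
  next
    case False
    then show ?thesis
      using v fin by (simp add: \<gamma>_def if_distrib[of "\<lambda>z. z * _"] sum.delta cong: if_cong)
  qed
qed

lemma det_Mmat_rotate1:
  fixes rot :: "'v \<Rightarrow> ('e \<times> bool) list"
  assumes bal: "balanced V E rot" and finV: "finite V" and finE: "finite E" and r: "r \<in> V" and v: "v \<in> V"
  shows "det_on (Midx E V r) (Mmat \<theta> \<alpha> V (rot(v := rotate1 (rot v))))
       = det_on (Midx E V r) (Mmat \<theta> \<alpha> V rot)"
proof (cases "rot v")
  case Nil
  then show ?thesis by (simp add: fun_upd_idem)
next
  case (Cons h T)
  let ?I = "Midx E V r" and ?M = "Mmat \<theta> \<alpha> V rot" and ?S = "incid_list (rot v)"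
  obtain \<gamma> where \<gamma>: "\<And>q. q \<in> E \<Longrightarrow> (\<Sum>w\<in>V - {r}. \<gamma> w * incid_list (rot w) q) = ?S q"
    using balanced_vertex_row_combination[OF bal finV r v] by blast
  \<comment> \<open>moving the first half-edge h at v to the end adds to f a rank-two term built from the row of v\<close>
  have twist: "fcoef \<theta> V (rot(v := rotate1 (rot v))) p q
      = fcoef \<theta> V rot p q - \<theta> / 2 * (?S p * hsign h q - ?S q * hsign h p)" for p q
  proof -
    have "(\<Sum>w\<in>V - {v}. twist_list ((rot(v := rotate1 (rot v))) w) p q)
        = (\<Sum>w\<in>V - {v}. twist_list (rot w) p q)"
      by (rule sum.cong) auto
    then have "(\<Sum>w\<in>V. twist_list ((rot(v := rotate1 (rot v))) w) p q)
        = (\<Sum>w\<in>V. twist_list (rot w) p q) + 2 * (?S p * hsign h q - ?S q * hsign h p)"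
      using Cons twist_list_rotate1_Cons[of h T p q] by (simp add: sum.remove[OF finV v])
    then show ?thesis
      unfolding fcoef_eq_twist_list by (simp only:) (simp add: algebra_simps)
  qed
  define K :: "('e + 'v) set" where "K = Inr ` (V - {r})"
  define u :: "'e + 'v \<Rightarrow> real" where "u x = (case x of Inl p \<Rightarrow> \<theta> / 2 * hsign h p | Inr _ \<Rightarrow> 0)" for x
  define g :: "'e + 'v \<Rightarrow> real" where "g = case_sum (\<lambda>_. 0) \<gamma>"
  have K_sum: "(\<Sum>k\<in>K. f k) = (\<Sum>w\<in>V - {r}. f (Inr w))" for f :: "'e + 'v \<Rightarrow> real"
    by (simp add: K_def sum.reindex)
  have row: "(\<Sum>k\<in>K. g k * ?M k (Inl q)) = ?S q" if "q \<in> E" for q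
    using \<gamma> that by (simp add: K_sum g_def)
  have col: "(\<Sum>k\<in>K. g k * ?M (Inl p) k) = - ?S p" if "p \<in> E" for p
    using \<gamma> that by (simp add: K_sum g_def sum_negf)
  have vertex_row: "(\<Sum>k\<in>K. g k * ?M k (Inr w)) = 0" and vertex_col: "(\<Sum>k\<in>K. g k * ?M (Inr w) k) = 0"
    for w by (simp_all add: K_sum g_def)
  have "det_on ?I (Mmat \<theta> \<alpha> V (rot(v := rotate1 (rot v))))
      = det_on ?I (\<lambda>x y. ?M x y + u x * (\<Sum>k\<in>K. g k * ?M k y) + u y * (\<Sum>k\<in>K. g k * ?M x k))"
  proof (rule det_on_cong)
    fix x y assume "x \<in> ?I" "y \<in> ?I"
    then show "Mmat \<theta> \<alpha> V (rot(v := rotate1 (rot v))) x y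
        = ?M x y + u x * (\<Sum>k\<in>K. g k * ?M k y) + u y * (\<Sum>k\<in>K. g k * ?M x k)"
      using row col by (cases x; cases y)
        (auto simp: Midx_def u_def twist vertex_row vertex_col algebra_simps)
  qed
  also have "\<dots> = det_on ?I ?M"
    by (rule det_on_add_rank_two[OF finite_Midx[OF finE finV]])
       (auto simp: K_def Midx_def u_def)
  finally show ?thesis .
qed

lemma cyc_compat_refl [simp]: "cyc_compat xs xs"
  unfolding cyc_compat_def by (metis rotate0 id_apply)

lemma cyc_compat_trans: "cyc_compat xs ys \<Longrightarrow> cyc_compat ys zs \<Longrightarrow> cyc_compat xs zs"
  unfolding cyc_compat_def by (metis rotate_rotate)

lemma cyc_compat_rotate: "cyc_compat xs (rotate n xs)"
proof (cases "xs = []")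
  case False
  then have "(length xs - n mod length xs + n) mod length xs = 0"
    by (metis add.commute le_add_diff_inverse length_greater_0_conv less_imp_le mod_add_right_eq
        mod_less_divisor mod_self)
  then have "rotate (length xs - n mod length xs) (rotate n xs) = xs"
    by (simp add: rotate_rotate)
  then show ?thesis unfolding cyc_compat_def by metis
qed (simp add: cyc_compat_def)

lemma cyc_compat_sym: "cyc_compat xs ys \<Longrightarrow> cyc_compat ys xs"
  unfolding cyc_compat_def using cyc_compat_rotate[unfolded cyc_compat_def] by blast

lemma cyc_compat_append_swap: "cyc_compat (xs @ ys) (ys @ xs)"
  unfolding cyc_compat_def by (metis rotate_append)

lemma cyc_compat_filter:
  assumes "cyc_compat xs ys"
  shows "cyc_compat (filter P xs) (filter P ys)"
proof -
  have "cyc_compat (filter P (rotate1 zs)) (filter P zs)" for zs :: "'a list"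
    by (cases zs) (auto simp: cyc_compat_def intro: exI[of _ 1] exI[of _ 0])
  then have "cyc_compat (filter P (rotate n ys)) (filter P ys)" for n
    by (induction n) (auto intro: cyc_compat_trans)
  then show ?thesis
    using assms by (auto simp: cyc_compat_def)
qed

lemma incid_list_cyc_compat: "cyc_compat L M \<Longrightarrow> incid_list L x = incid_list M x"
  by (auto simp: cyc_compat_def)

lemma balanced_cyc_compat:
  assumes "balanced V E rot" and "\<And>v. v \<in> V \<Longrightarrow> cyc_compat (rot' v) (rot v)"
  shows "balanced V E rot'"
proof -
  have "(\<Sum>v\<in>V. incid_list (rot' v) x) = (\<Sum>v\<in>V. incid_list (rot v) x)" for x
    by (rule sum.cong) (simp_all add: assms(2) incid_list_cyc_compat)
  then show ?thesis using assms(1) by (simp add: balanced_def)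
qed

lemma det_Mmat_update_cyc_compat:
  assumes bal: "balanced V E rot" and fin: "finite V" "finite E" and r: "r \<in> V" and v: "v \<in> V"
    and L: "cyc_compat L (rot v)"
  shows "det_on (Midx E V r) (Mmat \<theta> \<alpha> V (rot(v := L))) = det_on (Midx E V r) (Mmat \<theta> \<alpha> V rot)"
proof -
  obtain n where "L = rotate n (rot v)"
    using L by (auto simp: cyc_compat_def)
  moreover have "det_on (Midx E V r) (Mmat \<theta> \<alpha> V (rot(v := rotate n (rot v))))
      = det_on (Midx E V r) (Mmat \<theta> \<alpha> V rot)"
  proof (induction n)
    case (Suc n)
    let ?R = "rot(v := rotate n (rot v))"
    have "balanced V E ?R"
      by (rule balanced_cyc_compat[OF bal]) (simp add: cyc_compat_sym cyc_compat_rotate)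
    have "det_on (Midx E V r) (Mmat \<theta> \<alpha> V (rot(v := rotate (Suc n) (rot v))))
        = det_on (Midx E V r) (Mmat \<theta> \<alpha> V (?R(v := rotate1 (?R v))))"
      by simp
    also have "\<dots> = det_on (Midx E V r) (Mmat \<theta> \<alpha> V ?R)"
      by (rule det_Mmat_rotate1[OF \<open>balanced V E ?R\<close> fin r v])
    also have "\<dots> = det_on (Midx E V r) (Mmat \<theta> \<alpha> V rot)"
      by (rule Suc.IH)
    finally show ?case .
  qed (simp add: fun_upd_idem)
  ultimately show ?thesis by simp
qed

lemma det_Mmat_cyc_compat:
  assumes bal: "balanced V E rot" and fin: "finite V" "finite E" and r: "r \<in> V"
    and cyc: "\<And>v. v \<in> V \<Longrightarrow> cyc_compat (rot' v) (rot v)"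
  shows "det_on (Midx E V r) (Mmat \<theta> \<alpha> V rot') = det_on (Midx E V r) (Mmat \<theta> \<alpha> V rot)"
proof -
  define R where "R U = (\<lambda>w. if w \<in> U then rot' w else rot w)" for U
  have "det_on (Midx E V r) (Mmat \<theta> \<alpha> V (R U)) = det_on (Midx E V r) (Mmat \<theta> \<alpha> V rot)"
    if "finite U" "U \<subseteq> V" for U
    using that
  proof (induction U rule: finite_induct)
    case (insert u U)
    have "balanced V E (R U)"
      by (rule balanced_cyc_compat[OF bal]) (use cyc in \<open>auto simp: R_def\<close>)
    moreover have "cyc_compat (rot' u) (R U u)"
      using insert cyc by (simp add: R_def)
    ultimately have "det_on (Midx E V r) (Mmat \<theta> \<alpha> V ((R U)(u := rot' u)))
        = det_on (Midx E V r) (Mmat \<theta> \<alpha> V (R U))"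
      using insert.prems det_Mmat_update_cyc_compat[OF _ fin r] by simp
    moreover have "(R U)(u := rot' u) = R (insert u U)"
      by (auto simp: R_def)
    ultimately show ?case
      using insert by simp
  qed (simp add: R_def)
  from this[of V] have "det_on (Midx E V r) (Mmat \<theta> \<alpha> V (R V)) = det_on (Midx E V r) (Mmat \<theta> \<alpha> V rot)"
    using fin by simp
  moreover have "det_on (Midx E V r) (Mmat \<theta> \<alpha> V rot') = det_on (Midx E V r) (Mmat \<theta> \<alpha> V (R V))"
    by (rule det_Mmat_cong) (simp add: R_def)
  ultimately show ?thesis by simp
qed

lemma ribbon_wf_balanced:
  assumes wf: "ribbon_wf V E src tgt rot"
  shows "balanced V E rot"
  unfolding balanced_def
proof
  fix x assume x: "x \<in> E"
  have "incid_list (rot v) x = (if src x = v then 1 else 0) - (if tgt x = v then 1 else 0)" if "v \<in> V" for v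
    using wf that x by (auto simp: ribbon_wf_def incid_list_distinct)
  then have "(\<Sum>v\<in>V. incid_list (rot v) x) = (\<Sum>v\<in>V. (if src x = v then 1 else 0) - (if tgt x = v then 1 else 0))"
    by simp
  also have "\<dots> = 0"
    using wf x by (simp add: ribbon_wf_def sum_subtractf sum.delta)
  finally show "(\<Sum>v\<in>V. incid_list (rot v) x) = 0" .
qed

lemma ribbon_wf_end_half_edge:
  assumes wf: "ribbon_wf V E src tgt rot" and e: "e \<in> E" "src e \<noteq> tgt e" and v: "v \<in> {src e, tgt e}"
  shows "(e, v = src e) \<in> set (rot v)" and "\<And>h. h \<in> set (rot v) \<Longrightarrow> fst h = e \<Longrightarrow> h = (e, v = src e)"
  using assms by (auto simp: ribbon_wf_def)

lemma ribbon_wf_other_half_edges: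
  assumes "ribbon_wf V E src tgt rot" and "v \<in> V - {src e, tgt e}"
  shows "e \<notin> fst ` set (rot v)"
  using assms by (auto simp: ribbon_wf_def)

lemma cut_after_cyc_compat:
  assumes h: "h \<in> set L" "fst h = e" and uniq: "\<And>h'. h' \<in> set L \<Longrightarrow> fst h' = e \<Longrightarrow> h' = h"
    and dist: "distinct L"
  shows "cyc_compat (h # cut_after e L) L" and "e \<notin> fst ` set (cut_after e L)"
proof -
  define i where "i = length (takeWhile (\<lambda>h. fst h \<noteq> e) L)"
  have i: "i < length L"
  proof (rule ccontr)
    assume "\<not> i < length L"
    then have "takeWhile (\<lambda>h. fst h \<noteq> e) L = L" unfolding i_def
      by (metis length_takeWhile_le nat_less_le takeWhile_eq_take take_all)
    then show False using h by (metis set_takeWhileD)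
  qed
  then have "fst (L ! i) = e"
    unfolding i_def using nth_length_takeWhile by blast
  then have rot: "rotate i L = h # cut_after e L"
    using i uniq unfolding cut_after_def i_def[symmetric] Let_def
    by (simp add: rotate_drop_take Cons_nth_drop_Suc[symmetric])
  then show "cyc_compat (h # cut_after e L) L"
    unfolding cyc_compat_def by (metis)
  have "distinct (h # cut_after e L)"
    using dist rot by (metis distinct_rotate)
  moreover have "set (cut_after e L) \<subseteq> set L"
    using rot by (metis set_rotate set_subset_Cons)
  ultimately show "e \<notin> fst ` set (cut_after e L)"
    using uniq by auto
qed

lemma det_Mmat_filter:
  "det_on (Midx (E - {e}) V r) (Mmat \<theta> \<alpha> V (\<lambda>v. filter (\<lambda>h. fst h \<noteq> e) (rot v)))
   = det_on (Midx (E - {e}) V r) (Mmat \<theta> \<alpha> V rot)"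
proof (rule det_on_cong)
  fix x y assume x: "x \<in> Midx (E - {e}) V r" and y: "y \<in> Midx (E - {e}) V r"
  have incid: "incid_list (filter (\<lambda>h. fst h \<noteq> e) L) p = incid_list L p" if "p \<noteq> e" for L p
    by (rule incid_list_filter) (use that in auto)
  have twist: "twist_list (filter (\<lambda>h. fst h \<noteq> e) L) p q = twist_list L p q" if "p \<noteq> e" "q \<noteq> e" for L p q
    by (rule twist_list_filter) (use that in auto)
  have ne: "p \<noteq> e" if "Inl p \<in> Midx (E - {e}) V r" for p
    using that by (auto simp: Midx_def)
  show "Mmat \<theta> \<alpha> V (\<lambda>v. filter (\<lambda>h. fst h \<noteq> e) (rot v)) x y = Mmat \<theta> \<alpha> V rot x y"
    using x y by (cases x; cases y) (simp_all add: ne fcoef_eq_twist_list twist incid)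
qed

lemma balanced_filter:
  assumes "balanced V E rot"
  shows "balanced V (E - {e}) (\<lambda>v. filter (\<lambda>h. fst h \<noteq> e) (rot v))"
  unfolding balanced_def
proof
  fix x assume x: "x \<in> E - {e}"
  have "incid_list (filter (\<lambda>h. fst h \<noteq> e) (rot v)) x = incid_list (rot v) x" for v
    by (rule incid_list_filter) (use x in auto)
  then show "(\<Sum>v\<in>V. incid_list (filter (\<lambda>h. fst h \<noteq> e) (rot v)) x) = 0"
    using assms x by (simp add: balanced_def)
qed

text \<open>The edge e joins d, the end that disappears in the contraction, to k, the end that becomes
  the merged vertex.\<close>

locale edge_at_front =
  fixes V :: "'v set" and E :: "'e set" and rot :: "'v \<Rightarrow> ('e \<times> bool) list"
    and e :: 'e and d k :: 'v and s :: bool and D K :: "('e \<times> bool) list"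
  assumes finite_V: "finite V" and finite_E: "finite E" and e_in_E: "e \<in> E"
    and d_in_V: "d \<in> V" and k_in_V: "k \<in> V" and d_neq_k: "d \<noteq> k"
    and rot_d: "rot d = (e, s) # D" and rot_k: "rot k = (e, \<not> s) # K"
    and e_notin_D: "e \<notin> fst ` set D" and e_notin_K: "e \<notin> fst ` set K"
    and e_notin_others: "\<And>v. v \<in> V - {d, k} \<Longrightarrow> e \<notin> fst ` set (rot v)"
begin

definition \<sigma> :: real where "\<sigma> = (if s then 1 else -1)"

definition contracted :: "'v \<Rightarrow> ('e \<times> bool) list" where
  "contracted = rot(k := D @ K)"

lemma \<sigma>_square: "\<sigma> * \<sigma> = 1"
  by (simp add: \<sigma>_def)

lemma incid_list_at_e:
  "incid_list (rot d) e = \<sigma>" "incid_list (rot k) e = - \<sigma>"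
  "v \<in> V - {d, k} \<Longrightarrow> incid_list (rot v) e = 0"
  by (simp_all add: rot_d rot_k \<sigma>_def hsign_def incid_list_eq_0[OF e_notin_D]
      incid_list_eq_0[OF e_notin_K] incid_list_eq_0[OF e_notin_others])

lemma incid_list_ends:
  "p \<noteq> e \<Longrightarrow> incid_list (rot d) p = incid_list D p"
  "p \<noteq> e \<Longrightarrow> incid_list (rot k) p = incid_list K p"
  by (simp_all add: rot_d rot_k hsign_def)

lemma sum_split_ends:
  "(\<Sum>v\<in>V. f v) = f d + f k + (\<Sum>v\<in>V - {d, k}. f v)"
  "(\<Sum>v\<in>V - {d}. f v) = f k + (\<Sum>v\<in>V - {d, k}. f v)"
proof -
  have "V - {d} - {k} = V - {d, k}" by auto
  then show "(\<Sum>v\<in>V - {d}. f v) = f k + (\<Sum>v\<in>V - {d, k}. f v)"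
    using sum.remove[of "V - {d}" k f] finite_V k_in_V d_neq_k by simp
  then show "(\<Sum>v\<in>V. f v) = f d + f k + (\<Sum>v\<in>V - {d, k}. f v)"
    using sum.remove[OF finite_V d_in_V, of f] by (simp add: add.assoc)
qed

lemma fcoef_at_e:
  assumes "q \<noteq> e"
  shows "fcoef \<theta> V rot e q = - (\<theta> / 4) * \<sigma> * (incid_list D q - incid_list K q)"
    and "fcoef \<theta> V rot q e = \<theta> / 4 * \<sigma> * (incid_list D q - incid_list K q)"
proof -
  have "twist_list (rot d) e q = \<sigma> * incid_list D q" "twist_list (rot k) e q = - \<sigma> * incid_list K q"
    using assms
    by (simp_all add: rot_d rot_k \<sigma>_def hsign_def twist_list_eq_0[OF e_notin_D] incid_list_eq_0[OF e_notin_D]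
        twist_list_eq_0[OF e_notin_K] incid_list_eq_0[OF e_notin_K])
  moreover have "(\<Sum>v\<in>V - {d, k}. twist_list (rot v) e q) = 0"
    by (intro sum.neutral ballI twist_list_eq_0 e_notin_others)
  ultimately have "(\<Sum>v\<in>V. twist_list (rot v) e q) = \<sigma> * (incid_list D q - incid_list K q)"
    unfolding sum_split_ends(1) by (simp add: algebra_simps)
  moreover have "(\<Sum>v\<in>V. twist_list (rot v) q e) = - (\<Sum>v\<in>V. twist_list (rot v) e q)"
    by (simp add: twist_list_antisym[of _ q e] sum_negf)
  ultimately show "fcoef \<theta> V rot e q = - (\<theta> / 4) * \<sigma> * (incid_list D q - incid_list K q)"
    and "fcoef \<theta> V rot q e = \<theta> / 4 * \<sigma> * (incid_list D q - incid_list K q)"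
    by (simp_all add: fcoef_eq_twist_list)
qed

lemma fcoef_contracted:
  assumes "p \<noteq> e" "q \<noteq> e"
  shows "fcoef \<theta> (V - {d}) contracted p q
       = fcoef \<theta> V rot p q - \<theta> / 4 * (incid_list D p * incid_list K q - incid_list D q * incid_list K p)"
proof -
  have "twist_list (rot d) p q = twist_list D p q" "twist_list (rot k) p q = twist_list K p q"
    using assms by (simp_all add: rot_d rot_k hsign_def)
  moreover have "(\<Sum>v\<in>V - {d, k}. twist_list (contracted v) p q) = (\<Sum>v\<in>V - {d, k}. twist_list (rot v) p q)"
    by (rule sum.cong) (auto simp: contracted_def)
  ultimately show ?thesis
    unfolding fcoef_eq_twist_list sum_split_ends
    by (simp add: contracted_def twist_list_append algebra_simps)
qed

lemma balanced_contracted: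
  assumes "balanced V E rot"
  shows "balanced (V - {d}) (E - {e}) contracted"
  unfolding balanced_def
proof
  fix x assume x: "x \<in> E - {e}"
  have "(\<Sum>v\<in>V - {d, k}. incid_list (contracted v) x) = (\<Sum>v\<in>V - {d, k}. incid_list (rot v) x)"
    by (rule sum.cong) (auto simp: contracted_def)
  moreover have "(\<Sum>v\<in>V. incid_list (rot v) x) = 0"
    using assms x by (simp add: balanced_def)
  ultimately show "(\<Sum>v\<in>V - {d}. incid_list (contracted v) x) = 0"
    using x unfolding sum_split_ends by (simp add: contracted_def incid_list_ends add.assoc)
qed

lemma schur_complement_entries:
  fixes \<theta> :: real and \<alpha> :: "'e \<Rightarrow> real"
  defines "M \<equiv> Mmat \<theta> \<alpha> V rot"
  assumes x: "x \<in> Midx (E - {e}) (V - {d}) r" and y: "y \<in> Midx (E - {e}) (V - {d}) r"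
  shows "M x y + (M x (Inr d) * M (Inl e) y - M x (Inl e) * M (Inr d) y) / \<sigma>
       = Mmat \<theta> \<alpha> (V - {d}) contracted x y"
proof -
  have \<sigma>: "\<sigma> \<noteq> 0" using \<sigma>_square by auto
  have vertex_cases: "v = k \<or> v \<in> V - {d, k}" if "v \<in> V - {d}" for v
    using that by auto
  have contracted_k: "incid_list (contracted k) p = incid_list D p + incid_list K p" for p
    by (simp add: contracted_def)
  have contracted_other: "contracted v = rot v" if "v \<noteq> k" for v
    using that by (simp add: contracted_def)
  show ?thesis
  proof (cases x; cases y)
    fix p q assume xy: "x = Inl p" "y = Inl q"
    with x y have "p \<noteq> e" "q \<noteq> e" by (auto simp: Midx_def)
    then show ?thesis
      using xy \<sigma> by (simp add: M_def fcoef_at_e fcoef_contracted incid_list_ends field_simps)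
  next
    fix p v assume xy: "x = Inl p" "y = Inr v"
    with x y have p: "p \<noteq> e" and v: "v \<in> V - {d}" by (auto simp: Midx_def)
    from vertex_cases[OF v] show ?thesis
    proof
      assume "v = k"
      then show ?thesis
        using xy p \<sigma> by (simp add: M_def fcoef_at_e incid_list_at_e incid_list_ends contracted_k field_simps)
    next
      assume "v \<in> V - {d, k}"
      then show ?thesis
        using xy p contracted_other[of v] by (simp add: M_def incid_list_at_e)
    qed
  next
    fix v q assume xy: "x = Inr v" "y = Inl q"
    with x y have q: "q \<noteq> e" and v: "v \<in> V - {d}" by (auto simp: Midx_def)
    from vertex_cases[OF v] show ?thesis
    proof
      assume "v = k"
      then show ?thesis
        using xy q \<sigma> by (simp add: M_def incid_list_at_e incid_list_ends contracted_k field_simps)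
    next
      assume "v \<in> V - {d, k}"
      then show ?thesis
        using xy q contracted_other[of v] by (simp add: M_def incid_list_at_e)
    qed
  next
    fix v w assume "x = Inr v" "y = Inr w"
    then show ?thesis by (simp add: M_def)
  qed
qed

theorem det_Mmat_deletion_contraction:
  assumes r: "d \<noteq> r"
  shows "det_on (Midx E V r) (Mmat \<theta> \<alpha> V rot)
       = \<alpha> e * det_on (Midx (E - {e}) V r) (Mmat \<theta> \<alpha> V (\<lambda>v. filter (\<lambda>h. fst h \<noteq> e) (rot v)))
         + det_on (Midx (E - {e}) (V - {d}) r) (Mmat \<theta> \<alpha> (V - {d}) contracted)"
proof -
  let ?I = "Midx E V r" and ?M = "Mmat \<theta> \<alpha> V rot"
  define M0 where "M0 x y = (if x = Inl e \<and> y = Inl e then 0 else ?M x y)" for x y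
  have fin: "finite ?I" by (rule finite_Midx[OF finite_E finite_V])
  have eI: "Inl e \<in> ?I" and dI: "Inr d \<in> ?I"
    using e_in_E d_in_V r by (auto simp: Midx_def)
  have "det_on ?I ?M = \<alpha> e * det_on (Midx (E - {e}) V r) ?M + det_on ?I M0"
    using det_on_split_diagonal[OF fin eI, of ?M] by (simp add: Midx_Diff_Inl M0_def[abs_def])
  moreover have "det_on ?I M0 = \<sigma> * \<sigma> * det_on (?I - {Inl e, Inr d})
      (\<lambda>x y. M0 x y + (M0 x (Inr d) * M0 (Inl e) y - M0 x (Inl e) * M0 (Inr d) y) / \<sigma>)"
    by (rule det_on_eliminate_pair[OF fin eI dI])
       (use \<sigma>_square in \<open>auto simp: M0_def incid_list_at_e\<close>)
  moreover have "\<dots> = det_on (Midx (E - {e}) (V - {d}) r) (Mmat \<theta> \<alpha> (V - {d}) contracted)"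
    unfolding \<sigma>_square Midx_Diff_Inl_Inr mult_1
  proof (rule det_on_cong)
    fix x y assume x: "x \<in> Midx (E - {e}) (V - {d}) r" and y: "y \<in> Midx (E - {e}) (V - {d}) r"
    then have "x \<noteq> Inl e" "y \<noteq> Inl e" by (auto simp: Midx_def)
    then show "M0 x y + (M0 x (Inr d) * M0 (Inl e) y - M0 x (Inl e) * M0 (Inr d) y) / \<sigma>
        = Mmat \<theta> \<alpha> (V - {d}) contracted x y"
      using schur_complement_entries[OF x y] by (simp add: M0_def)
  qed
  ultimately show ?thesis
    by (simp add: det_Mmat_filter)
qed

theorem det_Mmat_deletion_contraction_cyc_compat:
  assumes bal: "balanced V E rot" and r: "r \<in> V" "d \<noteq> r"
    and rotD: "\<And>v. v \<in> V \<Longrightarrow> cyc_compat (rotD v) (filter (\<lambda>h. fst h \<noteq> e) (rot v))"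
    and rotC: "\<And>v. v \<in> V - {d} \<Longrightarrow> cyc_compat (rotC v) (contracted v)"
  shows "det_on (Midx E V r) (Mmat \<theta> \<alpha> V rot)
       = \<alpha> e * det_on (Midx (E - {e}) V r) (Mmat \<theta> \<alpha> V rotD)
         + det_on (Midx (E - {e}) (V - {d}) r) (Mmat \<theta> \<alpha> (V - {d}) rotC)"
proof -
  have "det_on (Midx (E - {e}) V r) (Mmat \<theta> \<alpha> V rotD)
      = det_on (Midx (E - {e}) V r) (Mmat \<theta> \<alpha> V (\<lambda>v. filter (\<lambda>h. fst h \<noteq> e) (rot v)))"
    using finite_V finite_E r by (intro det_Mmat_cyc_compat[OF balanced_filter[OF bal]] rotD) auto
  moreover have "det_on (Midx (E - {e}) (V - {d}) r) (Mmat \<theta> \<alpha> (V - {d}) rotC)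
      = det_on (Midx (E - {e}) (V - {d}) r) (Mmat \<theta> \<alpha> (V - {d}) contracted)"
    using finite_V finite_E r by (intro det_Mmat_cyc_compat[OF balanced_contracted[OF bal]] rotC) auto
  ultimately show ?thesis
    using det_Mmat_deletion_contraction[OF r(2)] by simp
qed

end

lemma ribbon_wf_edge_at_front:
  assumes wf: "ribbon_wf V E src tgt rot" and e: "e \<in> E" "src e \<noteq> tgt e"
    and dk: "{d, k} = {src e, tgt e}" "d \<noteq> k"
  defines "rot' \<equiv> rot(d := (e, d = src e) # cut_after e (rot d), k := (e, d \<noteq> src e) # cut_after e (rot k))"
  shows "edge_at_front V E rot' e d k (d = src e) (cut_after e (rot d)) (cut_after e (rot k))"
    and "\<And>v. v \<in> V \<Longrightarrow> cyc_compat (rot' v) (rot v)"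
proof -
  have ends: "d \<in> {src e, tgt e}" "k \<in> {src e, tgt e}"
    using dk(1) by blast+
  have k_src: "(k = src e) = (d \<noteq> src e)"
    using dk e(2) by (auto simp: doubleton_eq_iff)
  have dist: "distinct (rot v)" if "v \<in> {src e, tgt e}" for v
    using wf e that by (auto simp: ribbon_wf_def)
  have front: "cyc_compat ((e, v = src e) # cut_after e (rot v)) (rot v)" "e \<notin> fst ` set (cut_after e (rot v))"
    if "v \<in> {src e, tgt e}" for v
    using cut_after_cyc_compat[OF ribbon_wf_end_half_edge(1)[OF wf e that] _
        ribbon_wf_end_half_edge(2)[OF wf e that] dist[OF that]] by simp_all
  have "src e \<in> V" "tgt e \<in> V" "finite V" "finite E"
    using wf e by (auto simp: ribbon_wf_def)
  then show "edge_at_front V E rot' e d k (d = src e) (cut_after e (rot d)) (cut_after e (rot k))"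
  proof unfold_locales
    show "d \<in> V" "k \<in> V" using ends \<open>src e \<in> V\<close> \<open>tgt e \<in> V\<close> by auto
    show "rot' d = (e, d = src e) # cut_after e (rot d)" "rot' k = (e, d \<noteq> src e) # cut_after e (rot k)"
      using dk(2) by (simp_all add: rot'_def)
    show "e \<notin> fst ` set (cut_after e (rot d))" "e \<notin> fst ` set (cut_after e (rot k))"
      using front(2) ends by simp_all
    show "e \<notin> fst ` set (rot' v)" if "v \<in> V - {d, k}" for v
    proof -
      have "v \<in> V - {src e, tgt e}" using that dk(1) by auto
      then show ?thesis
        using that ribbon_wf_other_half_edges[OF wf] by (simp add: rot'_def)
    qed
  qed (use e dk in auto)
  show "cyc_compat (rot' v) (rot v)" if "v \<in> V" for v
    using dk front(1)[OF ends(1)] front(1)[OF ends(2)] k_src by (auto simp: rot'_def)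
qed

lemma cyc_compat_merged_rot:
  assumes "{d, k} = {src e, tgt e}" "d \<noteq> k"
  shows "cyc_compat (merged_rot src tgt rot e) (cut_after e (rot d) @ cut_after e (rot k))"
proof (cases "d = src e")
  case True
  with assms have "k = tgt e" by (auto simp: doubleton_eq_iff)
  with True show ?thesis by (simp add: merged_rot_def)
next
  case False
  with assms have "d = tgt e" "k = src e" by (auto simp: doubleton_eq_iff)
  then show ?thesis by (simp add: merged_rot_def cyc_compat_append_swap)
qed

theorem ribbon_wf_deletion_contraction:
  assumes wf: "ribbon_wf V E src tgt rot" and root: "r \<in> V"
    and edge: "e \<in> E" "src e \<noteq> tgt e" and dk: "{d, k} = {src e, tgt e}" "d \<noteq> r"
    and delD: "\<And>v. v \<in> V \<Longrightarrow> cyc_compat (rotD v) (filter (\<lambda>h. fst h \<noteq> e) (rot v))"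
    and contrC_merged: "cyc_compat (rotC k) (merged_rot src tgt rot e)"
    and contrC_other: "\<And>v. v \<in> V - {src e, tgt e} \<Longrightarrow> cyc_compat (rotC v) (rot v)"
  shows "det_on (Midx E V r) (Mmat \<theta> \<alpha> V rot)
       = \<alpha> e * det_on (Midx (E - {e}) V r) (Mmat \<theta> \<alpha> V rotD)
         + det_on (Midx (E - {e}) (V - {d}) r) (Mmat \<theta> \<alpha> (V - {d}) rotC)"
proof -
  have "d \<noteq> k"
    using dk(1) edge(2) by (auto simp: doubleton_eq_iff)
  define rot' where "rot' = rot(d := (e, d = src e) # cut_after e (rot d), k := (e, d \<noteq> src e) # cut_after e (rot k))"
  interpret edge_at_front V E rot' e d k "d = src e" "cut_after e (rot d)" "cut_after e (rot k)"
    unfolding rot'_def by (rule ribbon_wf_edge_at_front(1)[OF wf edge dk(1) \<open>d \<noteq> k\<close>])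
  have cyc: "cyc_compat (rot' v) (rot v)" if "v \<in> V" for v
    unfolding rot'_def by (rule ribbon_wf_edge_at_front(2)[OF wf edge dk(1) \<open>d \<noteq> k\<close> that])
  have bal: "balanced V E rot'"
    using balanced_cyc_compat[OF ribbon_wf_balanced[OF wf] cyc] .
  have rotD: "cyc_compat (rotD v) (filter (\<lambda>h. fst h \<noteq> e) (rot' v))" if "v \<in> V" for v
    by (rule cyc_compat_trans[OF delD[OF that] cyc_compat_filter[OF cyc_compat_sym[OF cyc[OF that]]]])
  have rotC: "cyc_compat (rotC v) (contracted v)" if v: "v \<in> V - {d}" for v
  proof (cases "v = k")
    case True
    then show ?thesis
      using cyc_compat_trans[OF contrC_merged
          cyc_compat_merged_rot[where src = src and tgt = tgt and e = e, OF dk(1) \<open>d \<noteq> k\<close>]]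
      by (simp add: contracted_def)
  next
    case False
    with v dk(1) have "v \<in> V - {src e, tgt e}" by auto
    with False v show ?thesis
      using contrC_other unfolding contracted_def by (simp add: rot'_def)
  qed
  have "det_on (Midx E V r) (Mmat \<theta> \<alpha> V rot) = det_on (Midx E V r) (Mmat \<theta> \<alpha> V rot')"
    by (rule det_Mmat_cyc_compat[OF bal finite_V finite_E root]) (rule cyc_compat_sym[OF cyc])
  also have "\<dots> = \<alpha> e * det_on (Midx (E - {e}) V r) (Mmat \<theta> \<alpha> V rotD)
      + det_on (Midx (E - {e}) (V - {d}) r) (Mmat \<theta> \<alpha> (V - {d}) rotC)"
    by (rule det_Mmat_deletion_contraction_cyc_compat[OF bal root dk(2) rotD rotC])
  finally show ?thesis .
qed

theorem theorem5p1:
  fixes V :: "'v set" and E :: "'e set" and src tgt :: "'e \<Rightarrow> 'v"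
    and rot rotD rotC :: "'v \<Rightarrow> ('e \<times> bool) list"
    and r :: 'v and e :: 'e and \<theta> :: real and \<alpha> :: "'e \<Rightarrow> real"
  assumes wf: "ribbon_wf V E src tgt rot"
    and root: "r \<in> V"
    and conn: "graph_connected V E src tgt"
    and theta: "\<theta> > 0"
    and edge: "e \<in> E" "src e \<noteq> tgt e"
    and connD: "graph_connected V (E - {e}) src tgt"
    and delD: "\<forall>v\<in>V. cyc_compat (rotD v) (filter (\<lambda>h. fst h \<noteq> e) (rot v))"
    and contrC_merged: "cyc_compat (rotC (keepv src tgt r e)) (merged_rot src tgt rot e)"
    and contrC_other: "\<forall>v\<in>V - {src e, tgt e}. cyc_compat (rotC v) (rot v)"
  shows "det_on (Midx E V r) (Mmat \<theta> \<alpha> V rot)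
         = \<alpha> e * det_on (Midx (E - {e}) V r) (Mmat \<theta> \<alpha> V rotD)
           + det_on (Midx (E - {e}) (V - {dropv src tgt r e}) r)
                    (Mmat \<theta> \<alpha> (V - {dropv src tgt r e}) rotC)"
  \<comment> \<open>the identity holds without the connectivity hypotheses and for every \<theta>\<close>
proof (rule ribbon_wf_deletion_contraction[OF wf root edge, where k = "keepv src tgt r e"])
  show "{dropv src tgt r e, keepv src tgt r e} = {src e, tgt e}" "dropv src tgt r e \<noteq> r"
    using edge(2) by (auto simp: dropv_def keepv_def)
qed (use delD contrC_merged contrC_other in auto)

end
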